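(* Let $0<\varepsilon\le1$, $\gamma>1$, $\Delta t>0$. Consider the first order semi-implicit (IMEX) time discretization of the Euler equations $U^{n+1}=U^n-\Delta t\,\nabla\cdot\hat F(U^n)-\Delta t\,\nabla\cdot\tilde F(U^{n+1})$, written as the explicit non-stiff step $$\widehat\rho=\rho^n-\Delta t\,\nabla\cdot(\rho\mathbf u)^n,\quad \widehat{\rho\mathbf u}=(\rho\mathbf u)^n-\Delta t\,\nabla\cdot(\rho\mathbf u\otimes\mathbf u+p\,\mathrm{Id})^n,\quad \widehat{\rho E}=(\rho E)^n-\Delta t\,\nabla\cdot\big((\rho E+\Pi)^n\mathbf u^n\big),$$ followed by the implicit stiff step $$\rho^{n+1}=\widehat\rho,\quad (\rho\mathbf u)^{n+1}=\widehat{\rho\mathbf u}-\frac{1-\varepsilon^2}{\varepsilon^2}\Delta t\,\nabla p^{n+1},\quad (\rho E)^{n+1}=\widehat{\rho E}-(1-\varepsilon^2)\Delta t\,\nabla\cdot\big((p-p_\infty)\mathbf u\big)^{n+1}.$$ Set $\widehat{\mathbf u}=\widehat{\rho\mathbf u}/\widehat\rho$ and $\widehat p=(\gamma-1)(\widehat{\rho E}-\frac{\varepsilon^2}{2}\widehat\rho\|\widehat{\mathbf u}\|^2)$. Then this scheme is equivalent to the explicit step above, the implicit mass and momentum updates above, and the nonlinear elliptic pressure equation $$-\frac{(1-\varepsilon^2)^2}{\varepsilon^2}\Delta t^2\,\nabla\cdot\Big(\frac{(p-p_\infty)^{n+1}}{\widehat\rho}\nabla p^{n+1}\Big)+\frac{p^{n+1}}{\gamma-1}=-\frac{(1-\varepsilon^2)^2}{2\varepsilon^2}\frac{\Delta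 t^2}{\widehat\rho}\|\nabla p^{n+1}\|^2-(1-\varepsilon^2)\Delta t\,(p-p_\infty)^{n+1}\nabla\cdot\widehat{\mathbf u}+\frac{\widehat p}{\gamma-1}.$$
   Context: Nondimensionalised Euler equations $U_t+\nabla\cdot F(U)=0$ in $\mathbb R^d$ with $U=(\rho,\rho\mathbf u,\rho E)$, $F(U)=(\rho\mathbf u,\rho\mathbf u\otimes\mathbf u+\frac{p}{\varepsilon^2}\mathrm{Id},(\rho E+p)\mathbf u)$, equation of state $p=(\gamma-1)(\rho E-\frac{\varepsilon^2}{2}\rho\|\mathbf u\|^2)$, reference Mach number $0<\varepsilon\le1$. Flux splitting $F=\hat F+\tilde F$ with $\hat F(U)=(\rho\mathbf u,\rho\mathbf u\otimes\mathbf u+p\,\mathrm{Id},(\rho E+\Pi)\mathbf u)$, $\tilde F(U)=(0,\frac{1-\varepsilon^2}{\varepsilon^2}p\,\mathrm{Id},(p-\Pi)\mathbf u)$, where $\Pi=\varepsilon^2p+(1-\varepsilon^2)p_\infty$ and the reference pressure is $p_\infty(t)=\inf_{\mathbf x}p(\mathbf x,t)$ (so $p-\Pi=(1-\varepsilon^2)(p-p_\infty)$). Superscripts $n$, $n+1$ denote time levels $t^n$, $t^{n+1}=t^n+\Delta t$. *)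

theory Defs
  imports "HOL-Analysis.Analysis"
begin

definition pdiff :: "(real^'d \<Rightarrow> 'b::real_normed_vector) \<Rightarrow> 'd \<Rightarrow> real^'d \<Rightarrow> 'b" where
  "pdiff f i x = frechet_derivative f (at x) (axis i 1)"

definition grad :: "(real^'d \<Rightarrow> real) \<Rightarrow> real^'d \<Rightarrow> real^'d" where
  "grad f x = (\<chi> i. pdiff f i x)"

definition divg :: "(real^'d \<Rightarrow> real^'d) \<Rightarrow> real^'d \<Rightarrow> real" where
  "divg F x = (\<Sum>i\<in>UNIV. pdiff F i x $ i)"

definition divT :: "(real^'d \<Rightarrow> real^'d^'d) \<Rightarrow> real^'d \<Rightarrow> real^'d" where
  "divT M x = (\<chi> j. \<Sum>i\<in>UNIV. pdiff M i x $ j $ i)"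

definition outer :: "real^'d \<Rightarrow> real^'d \<Rightarrow> real^'d^'d" where
  "outer u v = (\<chi> i j. u $ i * v $ j)"

definition twice_diff :: "('a::real_normed_vector \<Rightarrow> 'b::real_normed_vector) \<Rightarrow> bool" where
  "twice_diff f \<longleftrightarrow> (\<forall>x. f differentiable (at x)) \<and>
     (\<forall>v x. (\<lambda>y. frechet_derivative f (at y) v) differentiable (at x))"

text \<open>Primitive variables from conserved ones (rho, rho u, rho E).\<close>
definition vel :: "(real^'d \<Rightarrow> real) \<Rightarrow> (real^'d \<Rightarrow> real^'d) \<Rightarrow> real^'d \<Rightarrow> real^'d" where
  "vel rho m x = (1 / rho x) *\<^sub>R m x"

definition pres :: "real \<Rightarrow> real \<Rightarrow> (real^'d \<Rightarrow> real) \<Rightarrow> (real^'d \<Rightarrow> real^'d) \<Rightarrow> (real^'d \<Rightarrow> real)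
    \<Rightarrow> real^'d \<Rightarrow> real" where
  "pres \<gamma> \<epsilon> rho m E x = (\<gamma> - 1) * (E x - \<epsilon>\<^sup>2 / 2 * rho x * (norm (vel rho m x))\<^sup>2)"

definition pinf :: "(real^'d \<Rightarrow> real) \<Rightarrow> real" where
  "pinf p = Inf (range p)"

definition PiP :: "real \<Rightarrow> (real^'d \<Rightarrow> real) \<Rightarrow> real^'d \<Rightarrow> real" where
  "PiP \<epsilon> p x = \<epsilon>\<^sup>2 * p x + (1 - \<epsilon>\<^sup>2) * pinf p"

definition rho_hat :: "real \<Rightarrow> (real^'d \<Rightarrow> real) \<Rightarrow> (real^'d \<Rightarrow> real^'d) \<Rightarrow> real^'d \<Rightarrow> real" where
  "rho_hat dt rho m x = rho x - dt * divg m x"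

definition m_hat :: "real \<Rightarrow> real \<Rightarrow> real \<Rightarrow> (real^'d \<Rightarrow> real) \<Rightarrow> (real^'d \<Rightarrow> real^'d)
    \<Rightarrow> (real^'d \<Rightarrow> real) \<Rightarrow> real^'d \<Rightarrow> real^'d" where
  "m_hat \<gamma> \<epsilon> dt rho m E x = m x - dt *\<^sub>R
     divT (\<lambda>y. outer (m y) (vel rho m y) + pres \<gamma> \<epsilon> rho m E y *\<^sub>R mat 1) x"

definition E_hat :: "real \<Rightarrow> real \<Rightarrow> real \<Rightarrow> (real^'d \<Rightarrow> real) \<Rightarrow> (real^'d \<Rightarrow> real^'d)
    \<Rightarrow> (real^'d \<Rightarrow> real) \<Rightarrow> real^'d \<Rightarrow> real" where
  "E_hat \<gamma> \<epsilon> dt rho m E x = E x - dt *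
     divg (\<lambda>y. (E y + PiP \<epsilon> (pres \<gamma> \<epsilon> rho m E) y) *\<^sub>R vel rho m y) x"

end

theory Submission
  imports Defs
begin

text \<open>Given the mass and momentum updates, the new velocity is the explicit velocity
  \<open>uh\<close> corrected by \<open>- c/\<rho> \<nabla>p\<close> with \<open>c = (1-\<epsilon>\<^sup>2)/\<epsilon>\<^sup>2 \<Delta>t\<close>, so the pressure flux
  \<open>(p - p\<^sub>\<infinity>) u\<close> splits into \<open>(p - p\<^sub>\<infinity>) uh\<close> and an elliptic term in \<open>p\<close>.
  Writing both total energies as \<open>p/(\<gamma>-1) + \<epsilon>\<^sup>2/2 \<rho>\<parallel>u\<parallel>\<^sup>2\<close>, the cross term
  \<open>c \<nabla>p \<bullet> uh\<close> of the kinetic energy cancels the one produced by the product rule on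
  \<open>div((p - p\<^sub>\<infinity>) uh)\<close>, and the energy update becomes exactly the pressure equation.\<close>

lemma pdiff_eq: "(f has_derivative f') (at x) \<Longrightarrow> pdiff f i x = f' (axis i 1)"
  unfolding pdiff_def by (metis frechet_derivative_at)

lemma grad_inner_eq: "(f has_derivative f') (at x) \<Longrightarrow> grad f x \<bullet> v = (\<Sum>i\<in>UNIV. f' (axis i 1) * v $ i)"
  unfolding grad_def inner_vec_def by (simp add: pdiff_eq)

lemma grad_diff_const:
  assumes "f differentiable at x"
  shows "grad (\<lambda>y. f y - c) x = grad f x"
proof -
  have D: "(f has_derivative frechet_derivative f (at x)) (at x)"
    using assms frechet_derivative_works by blast
  then have "((\<lambda>y. f y - c) has_derivative frechet_derivative f (at x)) (at x)"
    by (auto intro!: derivative_eq_intros)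
  then show ?thesis
    unfolding grad_def by (simp add: pdiff_eq[OF D] pdiff_eq)
qed

lemma divg_diff:
  fixes f g :: "real^'d \<Rightarrow> real^'d"
  assumes "f differentiable at x" "g differentiable at x"
  shows "divg (\<lambda>y. f y - c *\<^sub>R g y) x = divg f x - c * divg g x"
proof -
  have "((\<lambda>y. f y - c *\<^sub>R g y) has_derivative
      (\<lambda>h. frechet_derivative f (at x) h - c *\<^sub>R frechet_derivative g (at x) h)) (at x)"
    using assms[unfolded frechet_derivative_works] by (auto intro!: derivative_eq_intros)
  then show ?thesis
    unfolding divg_def using assms[unfolded frechet_derivative_works]
    by (simp add: pdiff_eq sum_subtractf sum_distrib_left)
qed

lemma divg_scaleR:
  fixes f :: "real^'d \<Rightarrow> real" and g :: "real^'d \<Rightarrow> real^'d"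
  assumes "f differentiable at x" "g differentiable at x"
  shows "divg (\<lambda>y. f y *\<^sub>R g y) x = grad f x \<bullet> g x + f x * divg g x"
proof -
  note D = assms[unfolded frechet_derivative_works]
  have prod: "((\<lambda>y. f y *\<^sub>R g y) has_derivative
      (\<lambda>h. f x *\<^sub>R frechet_derivative g (at x) h + frechet_derivative f (at x) h *\<^sub>R g x)) (at x)"
    using D by (auto intro!: derivative_eq_intros)
  show ?thesis
    unfolding divg_def using D
    by (simp add: pdiff_eq[OF prod] pdiff_eq[of g] grad_inner_eq[of f] sum.distrib
        sum_distrib_left algebra_simps)
qed

lemma divg_scaleR_diff:
  fixes f r :: "real^'d \<Rightarrow> real" and v g :: "real^'d \<Rightarrow> real^'d"
  assumes "f differentiable at x" "v differentiable at x"
    and "(\<lambda>y. (f y / r y) *\<^sub>R g y) differentiable at x"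
  shows "divg (\<lambda>y. f y *\<^sub>R (v y - (c / r y) *\<^sub>R g y)) x
       = grad f x \<bullet> v x + f x * divg v x - c * divg (\<lambda>y. (f y / r y) *\<^sub>R g y) x"
proof -
  have "(\<lambda>y. f y *\<^sub>R (v y - (c / r y) *\<^sub>R g y)) = (\<lambda>y. f y *\<^sub>R v y - c *\<^sub>R ((f y / r y) *\<^sub>R g y))"
    by (simp add: fun_eq_iff scaleR_diff_right)
  moreover have "(\<lambda>y. f y *\<^sub>R v y) differentiable at x"
    using assms(1,2) by (rule differentiable_scaleR)
  ultimately show ?thesis
    unfolding divg_scaleR[OF assms(1,2), symmetric] using assms(3) by (simp only: divg_diff)
qed

lemma norm_diff_scaleR_square:
  fixes u g :: "'a::real_inner"
  shows "(norm (u - s *\<^sub>R g))\<^sup>2 = (norm u)\<^sup>2 - 2 * s * (g \<bullet> u) + s\<^sup>2 * (norm g)\<^sup>2"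
  unfolding power2_norm_eq_inner
  by (simp add: inner_diff_left inner_diff_right inner_commute algebra_simps power2_eq_square)

lemma energy_eq_pres:
  assumes "\<gamma> \<noteq> 1"
  shows "E x = pres \<gamma> \<epsilon> rho m E x / (\<gamma> - 1) + \<epsilon>\<^sup>2 / 2 * rho x * (norm (vel rho m x))\<^sup>2"
  using assms unfolding pres_def by (simp add: field_simps)

lemma pres_eq_inner:
  assumes "\<And>y. rho y \<noteq> 0"
  shows "pres \<gamma> \<epsilon> rho m E = (\<lambda>y. (\<gamma> - 1) * (E y - \<epsilon>\<^sup>2 / 2 * ((m y \<bullet> m y) / rho y)))"
proof
  fix y
  have "rho y * (norm (vel rho m y))\<^sup>2 = (m y \<bullet> m y) / rho y"
    using assms[of y]
    by (simp add: vel_def power_mult_distrib power_divide power2_eq_square field_simps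
        flip: power2_norm_eq_inner)
  then show "pres \<gamma> \<epsilon> rho m E y = (\<gamma> - 1) * (E y - \<epsilon>\<^sup>2 / 2 * ((m y \<bullet> m y) / rho y))"
    unfolding pres_def by (metis mult.assoc)
qed

lemma has_derivative_pres:
  fixes rho E :: "real^'d \<Rightarrow> real" and m :: "real^'d \<Rightarrow> real^'d"
  assumes "\<And>y. rho y \<noteq> 0"
    and "\<And>y. rho differentiable at y" "\<And>y. m differentiable at y" "\<And>y. E differentiable at y"
  shows "(pres \<gamma> \<epsilon> rho m E has_derivative (\<lambda>h. (\<gamma> - 1) * (frechet_derivative E (at y) h - \<epsilon>\<^sup>2 / 2 *
     ((frechet_derivative m (at y) h \<bullet> m y + m y \<bullet> frechet_derivative m (at y) h) / rho y
      - (m y \<bullet> m y) * frechet_derivative rho (at y) h / (rho y)\<^sup>2)))) (at y)"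
  unfolding pres_eq_inner[OF assms(1)]
  using assms(2-4)[of y, unfolded frechet_derivative_works] assms(1)[of y]
  by (auto intro!: derivative_eq_intros simp: field_simps power2_eq_square)

lemma differentiable_grad_pres:
  fixes rho E :: "real^'d \<Rightarrow> real" and m :: "real^'d \<Rightarrow> real^'d"
  assumes "\<And>y. rho y \<noteq> 0" "twice_diff rho" "twice_diff m" "twice_diff E"
  shows "grad (pres \<gamma> \<epsilon> rho m E) differentiable at x"
proof -
  have d: "\<And>y. rho differentiable at y" "\<And>y. m differentiable at y" "\<And>y. E differentiable at y"
    and dd: "\<And>v y. (\<lambda>z. frechet_derivative rho (at z) v) differentiable at y"
       "\<And>v y. (\<lambda>z. frechet_derivative m (at z) v) differentiable at y"
       "\<And>v y. (\<lambda>z. frechet_derivative E (at z) v) differentiable at y"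
    using assms(2-4) unfolding twice_diff_def by auto
  define F where "F = (\<lambda>y h. (\<gamma> - 1) * (frechet_derivative E (at y) h - \<epsilon>\<^sup>2 / 2 *
     ((frechet_derivative m (at y) h \<bullet> m y + m y \<bullet> frechet_derivative m (at y) h) / rho y
      - (m y \<bullet> m y) * frechet_derivative rho (at y) h / (rho y)\<^sup>2)))"
  have "grad (pres \<gamma> \<epsilon> rho m E) = (\<lambda>y. \<Sum>i\<in>UNIV. F y (axis i 1) *\<^sub>R axis i 1)"
  proof
    fix y
    have "grad (pres \<gamma> \<epsilon> rho m E) y = (\<chi> i. F y (axis i 1))"
      unfolding grad_def F_def using pdiff_eq[OF has_derivative_pres[OF assms(1) d]] by simp
    then show "grad (pres \<gamma> \<epsilon> rho m E) y = (\<Sum>i\<in>UNIV. F y (axis i 1) *\<^sub>R axis i 1)"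
      using basis_expansion[of "\<chi> i. F y (axis i 1)"] by (simp add: scalar_mult_eq_scaleR)
  qed
  moreover have "(\<lambda>y. \<Sum>i\<in>UNIV. F y (axis i 1) *\<^sub>R axis i 1) differentiable at x"
    unfolding F_def using assms(1) d dd
    by (intro differentiable_sum differentiable_scaleR differentiable_const) (auto simp: power2_eq_square)
  ultimately show ?thesis by simp
qed

lemma vel_momentum_update:
  assumes "\<And>y. m y = mh y - c *\<^sub>R g y"
  shows "vel rho m = (\<lambda>y. vel rho mh y - (c / rho y) *\<^sub>R g y)"
  unfolding vel_def assms by (simp add: scaleR_diff_right)

lemma divg_pressure_flux:
  fixes rho E :: "real^'d \<Rightarrow> real" and m mh :: "real^'d \<Rightarrow> real^'d"
  assumes "\<And>y. rho y \<noteq> 0" "twice_diff rho" "twice_diff m" "twice_diff E"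
    and momentum: "\<And>y. m y = mh y - c *\<^sub>R grad (pres \<gamma> \<epsilon> rho m E) y"
  defines "p \<equiv> pres \<gamma> \<epsilon> rho m E"
  shows "divg (\<lambda>y. (p y - P) *\<^sub>R vel rho m y) x
       = grad p x \<bullet> vel rho mh x + (p x - P) * divg (vel rho mh) x
         - c * divg (\<lambda>y. ((p y - P) / rho y) *\<^sub>R grad p y) x"
proof -
  have d: "\<And>y. rho differentiable at y" "\<And>y. m differentiable at y" "\<And>y. E differentiable at y"
    using assms(2-4) unfolding twice_diff_def by auto
  have dp: "\<And>y. p differentiable at y"
    unfolding p_def using has_derivative_pres[OF assms(1) d] by (rule differentiableI)
  have dgp: "\<And>y. grad p differentiable at y"
    unfolding p_def by (rule differentiable_grad_pres[OF assms(1-4)])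
  have "mh y = m y + c *\<^sub>R grad p y" for y
    using momentum[of y, folded p_def] by simp
  then have "vel rho mh = (\<lambda>y. (1 / rho y) *\<^sub>R (m y + c *\<^sub>R grad p y))"
    unfolding vel_def by simp
  then have "vel rho mh differentiable at x"
    using assms(1) d dgp by (auto intro!: derivative_intros)
  moreover have "(\<lambda>y. ((p y - P) / rho y) *\<^sub>R grad p y) differentiable at x"
    using dp dgp assms(1) d by (auto intro!: derivative_intros)
  moreover have "grad (\<lambda>y. p y - P) x = grad p x"
    using dp by (rule grad_diff_const)
  ultimately have "divg (\<lambda>y. (p y - P) *\<^sub>R (vel rho mh y - (c / rho y) *\<^sub>R grad p y)) x
       = grad p x \<bullet> vel rho mh x + (p x - P) * divg (vel rho mh) x
         - c * divg (\<lambda>y. ((p y - P) / rho y) *\<^sub>R grad p y) x"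
    using dp by (subst divg_scaleR_diff) auto
  then show ?thesis
    unfolding vel_momentum_update[OF momentum[folded p_def]] .
qed

lemma energy_update_iff_pressure_equation:
  fixes rho E Eh :: "real^'d \<Rightarrow> real" and m mh :: "real^'d \<Rightarrow> real^'d"
  assumes "\<epsilon> \<noteq> 0" "\<gamma> \<noteq> 1" "\<And>y. rho y > 0"
    and "twice_diff rho" "twice_diff m" "twice_diff E"
    and momentum: "\<And>y. m y = mh y - ((1 - \<epsilon>\<^sup>2) / \<epsilon>\<^sup>2 * dt) *\<^sub>R grad (pres \<gamma> \<epsilon> rho m E) y"
  defines "p \<equiv> pres \<gamma> \<epsilon> rho m E" and "uh \<equiv> vel rho mh"
  shows "E x = Eh x - (1 - \<epsilon>\<^sup>2) * dt * divg (\<lambda>y. (p y - pinf p) *\<^sub>R vel rho m y) x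
     \<longleftrightarrow> - ((1 - \<epsilon>\<^sup>2)\<^sup>2 / \<epsilon>\<^sup>2) * dt\<^sup>2 * divg (\<lambda>y. ((p y - pinf p) / rho y) *\<^sub>R grad p y) x
            + p x / (\<gamma> - 1)
         = - ((1 - \<epsilon>\<^sup>2)\<^sup>2 / (2 * \<epsilon>\<^sup>2)) * (dt\<^sup>2 / rho x) * (norm (grad p x))\<^sup>2
            - (1 - \<epsilon>\<^sup>2) * dt * (p x - pinf p) * divg uh x
            + pres \<gamma> \<epsilon> rho mh Eh x / (\<gamma> - 1)"
proof -
  define c where "c = (1 - \<epsilon>\<^sup>2) / \<epsilon>\<^sup>2 * dt"
  define P where "P = pinf p"
  have nz: "\<And>y. rho y \<noteq> 0"
    using assms(3) by (metis less_irrefl)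
  note momentum' = momentum[folded p_def c_def]
  have flux: "divg (\<lambda>y. (p y - P) *\<^sub>R vel rho m y) x
      = grad p x \<bullet> uh x + (p x - P) * divg uh x - c * divg (\<lambda>y. ((p y - P) / rho y) *\<^sub>R grad p y) x"
    unfolding p_def uh_def by (rule divg_pressure_flux[OF nz assms(4-6) momentum[folded c_def]])
  have kinetic: "(norm (vel rho m x))\<^sup>2
      = (norm (uh x))\<^sup>2 - 2 * (c / rho x) * (grad p x \<bullet> uh x) + (c / rho x)\<^sup>2 * (norm (grad p x))\<^sup>2"
    unfolding vel_momentum_update[OF momentum'] uh_def by (rule norm_diff_scaleR_square)
  have energy: "E x = p x / (\<gamma> - 1) + \<epsilon>\<^sup>2 / 2 * rho x * (norm (vel rho m x))\<^sup>2"
    unfolding p_def by (rule energy_eq_pres[OF assms(2)])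
  have energy_hat: "Eh x = pres \<gamma> \<epsilon> rho mh Eh x / (\<gamma> - 1) + \<epsilon>\<^sup>2 / 2 * rho x * (norm (uh x))\<^sup>2"
    unfolding uh_def by (rule energy_eq_pres[OF assms(2)])
  have "E x - (Eh x - (1 - \<epsilon>\<^sup>2) * dt * divg (\<lambda>y. (p y - P) *\<^sub>R vel rho m y) x)
      = (- ((1 - \<epsilon>\<^sup>2)\<^sup>2 / \<epsilon>\<^sup>2) * dt\<^sup>2 * divg (\<lambda>y. ((p y - P) / rho y) *\<^sub>R grad p y) x
           + p x / (\<gamma> - 1))
        - (- ((1 - \<epsilon>\<^sup>2)\<^sup>2 / (2 * \<epsilon>\<^sup>2)) * (dt\<^sup>2 / rho x) * (norm (grad p x))\<^sup>2
           - (1 - \<epsilon>\<^sup>2) * dt * (p x - P) * divg uh x + pres \<gamma> \<epsilon> rho mh Eh x / (\<gamma> - 1))"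
    unfolding flux energy energy_hat kinetic c_def
    using assms(1) assms(3)[of x] by (simp add: field_simps power2_eq_square)
  then show ?thesis
    unfolding P_def by linarith
qed

theorem lemma3p1:
  fixes \<epsilon> \<gamma> dt :: real
    and rho0 rho1 E0 E1 :: "real^'d \<Rightarrow> real"
    and m0 m1 :: "real^'d \<Rightarrow> real^'d"
  assumes "0 < \<epsilon>" "\<epsilon> \<le> 1" "\<gamma> > 1" "dt > 0"
    and "\<forall>x. rho0 x > 0"
    and "\<forall>x. rho_hat dt rho0 m0 x > 0"
    and "twice_diff rho0" "twice_diff m0" "twice_diff E0"
    and "twice_diff rho1" "twice_diff m1" "twice_diff E1"
  defines "rh \<equiv> rho_hat dt rho0 m0"
    and "mh \<equiv> m_hat \<gamma> \<epsilon> dt rho0 m0 E0"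
    and "Eh \<equiv> E_hat \<gamma> \<epsilon> dt rho0 m0 E0"
    and "uh \<equiv> vel (rho_hat dt rho0 m0) (m_hat \<gamma> \<epsilon> dt rho0 m0 E0)"
    and "ph \<equiv> pres \<gamma> \<epsilon> (rho_hat dt rho0 m0) (m_hat \<gamma> \<epsilon> dt rho0 m0 E0) (E_hat \<gamma> \<epsilon> dt rho0 m0 E0)"
    and "p1 \<equiv> pres \<gamma> \<epsilon> rho1 m1 E1"
    and "u1 \<equiv> vel rho1 m1"
  shows "((\<forall>x. rho1 x = rh x)
          \<and> (\<forall>x. m1 x = mh x - ((1 - \<epsilon>\<^sup>2) / \<epsilon>\<^sup>2 * dt) *\<^sub>R grad p1 x)
          \<and> (\<forall>x. E1 x = Eh x - (1 - \<epsilon>\<^sup>2) * dt * divg (\<lambda>y. (p1 y - pinf p1) *\<^sub>R u1 y) x))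
     \<longleftrightarrow>
         ((\<forall>x. rho1 x = rh x)
          \<and> (\<forall>x. m1 x = mh x - ((1 - \<epsilon>\<^sup>2) / \<epsilon>\<^sup>2 * dt) *\<^sub>R grad p1 x)
          \<and> (\<forall>x. - ((1 - \<epsilon>\<^sup>2)\<^sup>2 / \<epsilon>\<^sup>2) * dt\<^sup>2
                    * divg (\<lambda>y. ((p1 y - pinf p1) / rh y) *\<^sub>R grad p1 y) x
                  + p1 x / (\<gamma> - 1)
                = - ((1 - \<epsilon>\<^sup>2)\<^sup>2 / (2 * \<epsilon>\<^sup>2)) * (dt\<^sup>2 / rh x) * (norm (grad p1 x))\<^sup>2
                  - (1 - \<epsilon>\<^sup>2) * dt * (p1 x - pinf p1) * divg uh x
                  + ph x / (\<gamma> - 1)))"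
proof -
  have params: "\<epsilon> \<noteq> 0" "\<gamma> \<noteq> 1" and pos: "\<And>y. rh y > 0"
    using assms(1,3,6) unfolding rh_def by auto
  have uh: "uh = vel rh mh" and ph: "ph = pres \<gamma> \<epsilon> rh mh Eh"
    unfolding uh_def ph_def rh_def mh_def Eh_def by simp_all
  have "E1 x = Eh x - (1 - \<epsilon>\<^sup>2) * dt * divg (\<lambda>y. (p1 y - pinf p1) *\<^sub>R u1 y) x
     \<longleftrightarrow> - ((1 - \<epsilon>\<^sup>2)\<^sup>2 / \<epsilon>\<^sup>2) * dt\<^sup>2 * divg (\<lambda>y. ((p1 y - pinf p1) / rh y) *\<^sub>R grad p1 y) x
            + p1 x / (\<gamma> - 1)
         = - ((1 - \<epsilon>\<^sup>2)\<^sup>2 / (2 * \<epsilon>\<^sup>2)) * (dt\<^sup>2 / rh x) * (norm (grad p1 x))\<^sup>2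
            - (1 - \<epsilon>\<^sup>2) * dt * (p1 x - pinf p1) * divg uh x + ph x / (\<gamma> - 1)"
    if mass: "\<forall>x. rho1 x = rh x"
      and momentum: "\<forall>x. m1 x = mh x - ((1 - \<epsilon>\<^sup>2) / \<epsilon>\<^sup>2 * dt) *\<^sub>R grad p1 x" for x
  proof -
    have density: "rho1 = rh" using mass by auto
    have "twice_diff rh" using assms(10) unfolding density .
    moreover have "\<And>y. m1 y = mh y - ((1 - \<epsilon>\<^sup>2) / \<epsilon>\<^sup>2 * dt) *\<^sub>R grad (pres \<gamma> \<epsilon> rh m1 E1) y"
      using momentum unfolding p1_def density by blast
    ultimately show ?thesis
      unfolding p1_def u1_def uh ph density
      by (rule energy_update_iff_pressure_equation[OF params pos _ assms(11,12)])
  qed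
  then show ?thesis by blast
qed

end
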